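(* Let $X$ be a connected weighted bipartite graph with vertex $u$ such that $0\in\Phi_{\mathbf e_u}$. Suppose $S$ is a nonempty subset of $\Phi_{\mathbf e_u}\cap\mathbb R^+$ with $\sum_{\lambda\in S}(E_\lambda)_{u,u}\ge\frac14$. If either (i) $S$ is linearly independent over $\mathbb Q$, or (ii) $S$ consists of integers all having the same exponent of $2$ in their prime factorizations, then $u$ is not sedentary.
   Context: Graphs are simple, connected, undirected, with nonzero real edge weights; $A=A(X)=\sum_\lambda\lambda E_\lambda$ is the spectral decomposition of the weighted adjacency matrix over its distinct eigenvalues, $E_\lambda$ the orthogonal projection onto the $\lambda$-eigenspace; $\Phi_{\mathbf e_u}=\{\lambda:E_\lambda\mathbf e_u\ne0\}$. With $U(t)=e^{itA}$, $u$ is not sedentary if $\inf_{t>0}|U(t)_{u,u}|=0$. *)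

theory Defs
  imports "HOL-Analysis.Analysis" "HOL-Computational_Algebra.Computational_Algebra"
begin

text \<open>Weighted graphs on a finite vertex type 'n, given by their weighted adjacency matrix.\<close>

definition simple_weighted_graph :: "real^'n^'n \<Rightarrow> bool" where
  "simple_weighted_graph A \<longleftrightarrow> transpose A = A \<and> (\<forall>i. A $ i $ i = 0)"

definition graph_connected :: "real^'n^'n \<Rightarrow> bool" where
  "graph_connected A \<longleftrightarrow> (\<forall>i j. (i, j) \<in> {(x, y). A $ x $ y \<noteq> 0}\<^sup>*)"

definition graph_bipartite :: "real^'n^'n \<Rightarrow> bool" where
  "graph_bipartite A \<longleftrightarrow> (\<exists>V1. \<forall>i j. A $ i $ j \<noteq> 0 \<longrightarrow> (i \<in> V1 \<longleftrightarrow> j \<notin> V1))"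

definition eigenspace :: "real^'n^'n \<Rightarrow> real \<Rightarrow> (real^'n) set" where
  "eigenspace A lam = {v. A *v v = lam *\<^sub>R v}"

definition is_eigenvalue :: "real^'n^'n \<Rightarrow> real \<Rightarrow> bool" where
  "is_eigenvalue A lam \<longleftrightarrow> (\<exists>v. v \<noteq> 0 \<and> A *v v = lam *\<^sub>R v)"

definition orth_proj_matrix :: "(real^'n) set \<Rightarrow> real^'n^'n" where
  "orth_proj_matrix W = (THE P. \<forall>x. P *v x \<in> W \<and> (\<forall>w\<in>W. inner (x - P *v x) w = 0))"

definition eigenproj :: "real^'n^'n \<Rightarrow> real \<Rightarrow> real^'n^'n" where
  "eigenproj A lam = orth_proj_matrix (eigenspace A lam)"

definition eig_support :: "real^'n^'n \<Rightarrow> 'n \<Rightarrow> real set" where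
  "eig_support A u = {lam. is_eigenvalue A lam \<and> eigenproj A lam *v axis u 1 \<noteq> 0}"

fun mat_pow :: "'a::semiring_1^'n^'n \<Rightarrow> nat \<Rightarrow> 'a^'n^'n" where
  "mat_pow M 0 = mat 1"
| "mat_pow M (Suc k) = M ** mat_pow M k"

definition transition :: "real^'n^'n \<Rightarrow> real \<Rightarrow> complex^'n^'n" where
  "transition A t = (\<chi> i j. (\<Sum>k. (\<i> * complex_of_real t) ^ k / fact k *
       mat_pow (\<chi> a b. complex_of_real (A $ a $ b)) k $ i $ j))"

definition sedentary :: "real^'n^'n \<Rightarrow> 'n \<Rightarrow> bool" where
  "sedentary A u \<longleftrightarrow> (INF t\<in>{0<..}. norm (transition A t $ u $ u)) > 0"

definition lin_indep_over_Q :: "real set \<Rightarrow> bool" where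
  "lin_indep_over_Q S \<longleftrightarrow> (\<forall>T c. finite T \<and> T \<subseteq> S \<and>
      (\<Sum>x\<in>T. of_rat (c x) * x) = 0 \<longrightarrow> (\<forall>x\<in>T. c x = 0))"

end

theory Submission
  imports Defs
begin

text \<open>
  The weights c(lam) = (E_lam)_{u,u} are nonnegative, sum to 1, and
  U(t)_{u,u} = sum_lam c(lam) e^{i t lam}. In a bipartite graph the spectrum is symmetric and
  c(-lam) = c(lam), so U(t)_{u,u} = g(t) = sum_lam c(lam) cos(t lam) is real. Pairing each
  lam in S with -lam gives 1 - g(t) >= 2 sum_{lam in S} c(lam) (1 - cos(t lam)), which together
  with sum_{lam in S} c(lam) >= 1/4 yields g(t) <= 2 sum_{lam in S} c(lam) (1 + cos(t lam)).
  A suitable time t > 0 makes every t lam with lam in S (nearly) an odd multiple of pi: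
  Kronecker's theorem provides one under (i), and t = pi / 2^e works under (ii). Hence g takes
  arbitrarily small values at positive times. If |g| were bounded below by m > 0 there, a value g(t) < m would force g(t) <= -m,
  and since g(0) = 1 the intermediate value theorem would produce a zero of g.
\<close>

section \<open>Orthogonal projection onto a subspace\<close>

definition orth_proj :: "'a::euclidean_space set \<Rightarrow> 'a \<Rightarrow> 'a" where
  "orth_proj W x = (SOME y. y \<in> W \<and> (\<forall>w\<in>W. inner (x - y) w = 0))"

lemma orth_proj_unique:
  fixes W :: "'a::euclidean_space set"
  assumes "subspace W"
    and "y \<in> W" "\<forall>w\<in>W. inner (x - y) w = 0"
    and "y' \<in> W" "\<forall>w\<in>W. inner (x - y') w = 0"
  shows "y = y'"
proof -
  have "y - y' \<in> W" using assms subspace_diff by blast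
  then have "inner (x - y') (y - y') - inner (x - y) (y - y') = 0" using assms by simp
  then have "inner (y - y') (y - y') = 0" by (simp add: inner_diff_left)
  then show ?thesis by simp
qed

lemma orth_proj:
  fixes W :: "'a::euclidean_space set"
  assumes "subspace W"
  shows orth_proj_in: "orth_proj W x \<in> W"
    and orth_proj_orthogonal: "\<forall>w\<in>W. inner (x - orth_proj W x) w = 0"
proof -
  obtain y z where "y \<in> span W" "\<And>w. w \<in> span W \<Longrightarrow> orthogonal z w" "x = y + z"
    using orthogonal_subspace_decomp_exists[of W x] by metis
  moreover have "span W = W" using assms span_eq_iff[of W] by simp
  ultimately have "\<exists>y. y \<in> W \<and> (\<forall>w\<in>W. inner (x - y) w = 0)"
    by (intro exI[of _ y]) (auto simp: orthogonal_def)
  then have "orth_proj W x \<in> W \<and> (\<forall>w\<in>W. inner (x - orth_proj W x) w = 0)"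
    unfolding orth_proj_def by (rule someI_ex)
  then show "orth_proj W x \<in> W" "\<forall>w\<in>W. inner (x - orth_proj W x) w = 0" by auto
qed

lemma orth_proj_eqI:
  fixes W :: "'a::euclidean_space set"
  assumes "subspace W" "y \<in> W" "\<forall>w\<in>W. inner (x - y) w = 0"
  shows "orth_proj W x = y"
  using orth_proj_unique[OF assms(1) orth_proj[OF assms(1)] assms(2,3)] .

lemma linear_orth_proj:
  fixes W :: "'a::euclidean_space set"
  assumes "subspace W"
  shows "linear (orth_proj W)"
proof (rule linearI)
  fix x y
  show "orth_proj W (x + y) = orth_proj W x + orth_proj W y"
    using orth_proj[OF assms, of x] orth_proj[OF assms, of y]
    by (intro orth_proj_eqI assms subspace_add) (auto simp: inner_diff_left inner_add_left)
next
  fix r :: real and x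
  show "orth_proj W (r *\<^sub>R x) = r *\<^sub>R orth_proj W x"
    using orth_proj[OF assms, of x]
    by (intro orth_proj_eqI assms subspace_scale)
       (auto simp flip: scaleR_right_diff_distrib simp: inner_scaleR_left)
qed

lemma orth_proj_matrix_mult_eq:
  fixes W :: "(real^'n) set"
  assumes "subspace W"
  shows "orth_proj_matrix W *v x = orth_proj W x"
proof -
  let ?is_proj = "\<lambda>P::real^'n^'n. \<forall>x. P *v x \<in> W \<and> (\<forall>w\<in>W. inner (x - P *v x) w = 0)"
  have lin: "Vector_Spaces.linear (*s) (*s) (orth_proj W)"
    using linear_orth_proj[OF assms] linear_matrix_vector_mul_eq by blast
  have unique: "P = matrix (orth_proj W)" if "?is_proj P" for P
    unfolding matrix_eq using that matrix_works[OF lin] orth_proj_eqI[OF assms] by metis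
  have "?is_proj (matrix (orth_proj W))"
    using matrix_works[OF lin] orth_proj[OF assms] by simp
  then have "?is_proj (orth_proj_matrix W)"
    unfolding orth_proj_matrix_def by (rule theI[of ?is_proj, OF _ unique])
  then show ?thesis using unique matrix_works[OF lin] by metis
qed

section \<open>Spectral decomposition of a symmetric matrix\<close>

abbreviation eigenvalues :: "real^'n^'n \<Rightarrow> real set" where
  "eigenvalues A \<equiv> {lam. is_eigenvalue A lam}"

lemma subspace_eigenspace: "subspace (eigenspace A lam)"
  unfolding subspace_def eigenspace_def
  by (auto simp: matrix_vector_right_distrib matrix_vector_mult_scaleR scaleR_add_right)

lemma eigenproj_mult_eq: "eigenproj A lam *v x = orth_proj (eigenspace A lam) x"
  unfolding eigenproj_def by (rule orth_proj_matrix_mult_eq[OF subspace_eigenspace])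

lemma eigenproj_eigenvector: "A *v (eigenproj A lam *v x) = lam *\<^sub>R (eigenproj A lam *v x)"
  using orth_proj_in[OF subspace_eigenspace] unfolding eigenproj_mult_eq eigenspace_def by blast

lemma eigenproj_residual_orthogonal:
  "A *v w = lam *\<^sub>R w \<Longrightarrow> inner (x - eigenproj A lam *v x) w = 0"
  using orth_proj_orthogonal[OF subspace_eigenspace] unfolding eigenproj_mult_eq eigenspace_def
  by blast

lemma eigenproj_eqI:
  assumes "A *v y = lam *\<^sub>R y" "\<And>w. A *v w = lam *\<^sub>R w \<Longrightarrow> inner (x - y) w = 0"
  shows "eigenproj A lam *v x = y"
  unfolding eigenproj_mult_eq
  by (rule orth_proj_eqI[OF subspace_eigenspace]) (use assms in \<open>auto simp: eigenspace_def\<close>)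

lemma eigenproj_diag_nonneg: "eigenproj A lam $ u $ u \<ge> 0"
proof -
  let ?x = "axis u 1" let ?y = "eigenproj A lam *v ?x"
  have "eigenproj A lam $ u $ u = inner ?x ?y"
    by (simp add: inner_axis' matrix_vector_mult_basis column_def)
  also have "\<dots> = inner (?x - ?y) ?y + inner ?y ?y" by (simp add: inner_diff_left)
  also have "\<dots> = inner ?y ?y"
    using eigenproj_residual_orthogonal[OF eigenproj_eigenvector] by simp
  finally show ?thesis by simp
qed

lemma symmetric_matrix_inner:
  fixes A :: "real^'n^'n"
  assumes "transpose A = A"
  shows "inner (A *v x) y = inner x (A *v y)"
  by (metis assms dot_lmul_matrix transpose_matrix_vector)

lemma symmetric_eigenvectors_orthogonal:
  fixes A :: "real^'n^'n"
  assumes "transpose A = A" "A *v v = a *\<^sub>R v" "A *v w = b *\<^sub>R w" "a \<noteq> b"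
  shows "inner v w = 0"
proof -
  have "a * inner v w = b * inner v w"
    using symmetric_matrix_inner[OF assms(1), of v w] assms(2,3) by simp
  then show ?thesis using assms(4) by simp
qed

lemma finite_eigenvalues:
  fixes A :: "real^'n^'n"
  assumes sym: "transpose A = A"
  shows "finite (eigenvalues A)"
proof -
  define vec where "vec lam = (SOME v. v \<noteq> 0 \<and> A *v v = lam *\<^sub>R v)" for lam
  have vec: "vec lam \<noteq> 0 \<and> A *v vec lam = lam *\<^sub>R vec lam" if "lam \<in> eigenvalues A" for lam
    using someI_ex[of "\<lambda>v. v \<noteq> 0 \<and> A *v v = lam *\<^sub>R v"] that
    unfolding vec_def is_eigenvalue_def by simp
  have inj: "inj_on vec (eigenvalues A)"
  proof (rule inj_onI)
    fix a b assume "a \<in> eigenvalues A" "b \<in> eigenvalues A" "vec a = vec b"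
    then have "a *\<^sub>R vec a = b *\<^sub>R vec a" "vec a \<noteq> 0" using vec by metis+
    then show "a = b" by (simp add: scaleR_cancel_right)
  qed
  have "pairwise orthogonal (vec ` eigenvalues A)"
    unfolding pairwise_def orthogonal_def
  proof clarify
    fix a b assume "is_eigenvalue A a" "is_eigenvalue A b" "vec a \<noteq> vec b"
    then show "inner (vec a) (vec b) = 0"
      using symmetric_eigenvectors_orthogonal[OF sym, of "vec a" a "vec b" b] vec[of a] vec[of b]
      by auto
  qed
  moreover have "0 \<notin> vec ` eigenvalues A" using vec by fastforce
  ultimately have "independent (vec ` eigenvalues A)" using pairwise_orthogonal_independent by blast
  then have "finite (vec ` eigenvalues A)" using independent_bound by blast
  then show ?thesis using inj finite_imageD by blast
qed

lemma eq_0_if_linear_le_quadratic: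
  fixes b c :: real
  assumes "c \<ge> 0" "\<And>s. 2 * s * b \<le> s\<^sup>2 * c"
  shows "b = 0"
proof -
  have "c + 1 \<noteq> 0" using assms(1) by simp
  have "2 * (b / (c + 1)) * b * (c + 1)\<^sup>2 \<le> (b / (c + 1))\<^sup>2 * c * (c + 1)\<^sup>2"
    by (rule mult_right_mono[OF assms(2)]) simp
  moreover have "2 * (b / (c + 1)) * b * (c + 1)\<^sup>2 = 2 * b\<^sup>2 * (c + 1)"
    "(b / (c + 1))\<^sup>2 * c * (c + 1)\<^sup>2 = b\<^sup>2 * c"
    using \<open>c + 1 \<noteq> 0\<close> by (simp_all add: power2_eq_square)
  ultimately have "2 * b\<^sup>2 * (c + 1) \<le> b\<^sup>2 * c" by linarith
  then have "b\<^sup>2 * (c + 2) \<le> 0" by (simp add: algebra_simps)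
  moreover have "b\<^sup>2 * (c + 2) \<ge> 0" using assms(1) by simp
  ultimately show ?thesis using assms(1) by simp
qed

text \<open>The first-order condition at the maximiser x0 in direction y gives
  <x0, A y> = m <x0, y>; for y = A x0 - m x0 this forces y = 0.\<close>
lemma rayleigh_maximiser_eigenvector:
  fixes A :: "real^'n^'n"
  assumes sym: "transpose A = A" and R: "subspace R" "\<forall>x\<in>R. A *v x \<in> R"
    and x0: "x0 \<in> R" "inner x0 x0 = 1" "inner x0 (A *v x0) = m"
    and maximal: "\<forall>y\<in>R. inner y (A *v y) \<le> m * inner y y"
  shows "A *v x0 = m *\<^sub>R x0"
proof -
  have first_order: "inner x0 (A *v y) = m * inner x0 y" if "y \<in> R" for y
  proof -
    have "2 * s * (inner x0 (A *v y) - m * inner x0 y) \<le> s\<^sup>2 * (m * inner y y - inner y (A *v y))"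
      for s
    proof -
      have "x0 + s *\<^sub>R y \<in> R" using x0 that R by (simp add: subspace_add subspace_scale)
      then have "inner (x0 + s *\<^sub>R y) (A *v (x0 + s *\<^sub>R y))
                 \<le> m * inner (x0 + s *\<^sub>R y) (x0 + s *\<^sub>R y)"
        using maximal by blast
      moreover have "inner y (A *v x0) = inner x0 (A *v y)"
        using symmetric_matrix_inner[OF sym, of y x0] by (simp add: inner_commute)
      ultimately show ?thesis
        using x0 by (simp add: matrix_vector_right_distrib matrix_vector_mult_scaleR
            inner_add_left inner_add_right inner_commute[of y x0] power2_eq_square algebra_simps)
    qed
    then show ?thesis
      using eq_0_if_linear_le_quadratic[of "m * inner y y - inner y (A *v y)"] maximal that by force
  qed
  define y where "y = A *v x0 - m *\<^sub>R x0"
  have "y \<in> R" unfolding y_def using R x0 by (simp add: subspace_diff subspace_scale)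
  have "inner y y = inner (A *v x0) y - m * inner x0 y"
    unfolding y_def by (simp add: inner_diff_left)
  also have "\<dots> = 0"
    using first_order[OF \<open>y \<in> R\<close>] symmetric_matrix_inner[OF sym] by simp
  finally show ?thesis unfolding y_def by simp
qed

lemma symmetric_invariant_subspace_has_eigenvector:
  fixes A :: "real^'n^'n"
  assumes sym: "transpose A = A" and R: "subspace R" "\<forall>x\<in>R. A *v x \<in> R"
    and "r \<in> R" "r \<noteq> 0"
  obtains x m where "x \<in> R" "x \<noteq> 0" "A *v x = m *\<^sub>R x"
proof -
  define q where "q x = inner x (A *v x)" for x
  define K where "K = sphere 0 1 \<inter> R"
  have "compact K"
    unfolding K_def by (rule compact_Int_closed[OF compact_sphere closed_subspace[OF R(1)]])
  moreover have "r /\<^sub>R norm r \<in> K"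
    unfolding K_def using assms(4,5) R by (simp add: subspace_scale)
  moreover have "continuous_on K q"
    unfolding q_def by (intro continuous_intros matrix_vector_mult_linear_continuous_on)
  ultimately obtain x0 where x0: "x0 \<in> K" "\<And>y. y \<in> K \<Longrightarrow> q y \<le> q x0"
    using continuous_attains_sup by (metis empty_iff)
  have "q y \<le> q x0 * inner y y" if "y \<in> R" for y
  proof (cases "y = 0")
    case False
    have "y /\<^sub>R norm y \<in> K" unfolding K_def using that False R by (simp add: subspace_scale)
    then have "q (y /\<^sub>R norm y) \<le> q x0" using x0(2) by blast
    moreover have "q (y /\<^sub>R norm y) = q y / (norm y)\<^sup>2"
      by (simp add: q_def matrix_vector_mult_scaleR power2_eq_square divide_inverse)
    ultimately have "q y / (norm y)\<^sup>2 \<le> q x0" by simp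
    then show ?thesis using False by (simp add: divide_le_eq power2_norm_eq_inner mult.commute)
  qed (simp add: q_def)
  moreover have "x0 \<in> R" "inner x0 x0 = 1"
    using x0(1) unfolding K_def by (auto simp: dot_square_norm)
  ultimately have "A *v x0 = q x0 *\<^sub>R x0"
    using rayleigh_maximiser_eigenvector[OF sym R] unfolding q_def by blast
  moreover have "x0 \<noteq> 0" using \<open>inner x0 x0 = 1\<close> by auto
  ultimately show thesis using that \<open>x0 \<in> R\<close> by blast
qed

text \<open>The residual of x lies in the A-invariant subspace orthogonal to all eigenvectors,
  which contains no eigenvector and is therefore zero.\<close>
lemma sum_eigenproj:
  fixes A :: "real^'n^'n"
  assumes sym: "transpose A = A"
  shows "(\<Sum>lam\<in>eigenvalues A. eigenproj A lam *v x) = x"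
proof -
  define r where "r = x - (\<Sum>lam\<in>eigenvalues A. eigenproj A lam *v x)"
  define R where "R = {z. \<forall>w mu. A *v w = mu *\<^sub>R w \<longrightarrow> inner z w = 0}"
  have R: "subspace R" "\<forall>z\<in>R. A *v z \<in> R"
    unfolding R_def subspace_def using symmetric_matrix_inner[OF sym] by (auto simp: inner_add_left)
  have "inner r w = 0" if w: "A *v w = mu *\<^sub>R w" "w \<noteq> 0" for w mu
  proof -
    have "inner (eigenproj A lam *v x) w = (if lam = mu then inner x w else 0)" for lam
      using eigenproj_residual_orthogonal[OF w(1), of x]
        symmetric_eigenvectors_orthogonal[OF sym eigenproj_eigenvector w(1)]
      by (auto simp: inner_diff_left)
    moreover have "is_eigenvalue A mu" using w unfolding is_eigenvalue_def by blast
    ultimately show ?thesis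
      unfolding r_def using finite_eigenvalues[OF sym] by (simp add: inner_diff_left inner_sum_left)
  qed
  then have "r \<in> R" unfolding R_def by force
  have "r = 0"
  proof (rule ccontr)
    assume "r \<noteq> 0"
    then obtain e m where "e \<in> R" "e \<noteq> 0" "A *v e = m *\<^sub>R e"
      using symmetric_invariant_subspace_has_eigenvector[OF sym R \<open>r \<in> R\<close>] by blast
    then show False unfolding R_def by auto
  qed
  then show ?thesis unfolding r_def by simp
qed

lemma sum_eigenproj_diag:
  fixes A :: "real^'n^'n"
  assumes "transpose A = A"
  shows "(\<Sum>lam\<in>eigenvalues A. eigenproj A lam $ u $ u) = 1"
  using arg_cong[OF sum_eigenproj[OF assms, of "axis u 1"], of "\<lambda>v. v $ u"]
  by (simp add: sum_component matrix_vector_mult_basis column_def)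

lemma mat_pow_mult_eq_sum_eigenproj:
  fixes A :: "real^'n^'n"
  assumes "transpose A = A"
  shows "mat_pow A k *v x = (\<Sum>lam\<in>eigenvalues A. lam ^ k *\<^sub>R (eigenproj A lam *v x))"
proof (induction k)
  case 0
  then show ?case using sum_eigenproj[OF assms, of x] by (simp add: matrix_vector_mul_lid)
next
  case (Suc k)
  have "mat_pow A (Suc k) *v x = A *v (mat_pow A k *v x)" by (simp add: matrix_vector_mul_assoc)
  also have "\<dots> = (\<Sum>lam\<in>eigenvalues A. lam ^ k *\<^sub>R (A *v (eigenproj A lam *v x)))"
    unfolding Suc vec.sum by (simp add: matrix_vector_mult_scaleR)
  also have "\<dots> = (\<Sum>lam\<in>eigenvalues A. lam ^ Suc k *\<^sub>R (eigenproj A lam *v x))"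
    by (simp add: eigenproj_eigenvector mult.commute)
  finally show ?case .
qed

lemma mat_pow_diag_eq_sum_eigenproj:
  fixes A :: "real^'n^'n"
  assumes "transpose A = A"
  shows "mat_pow A k $ u $ u = (\<Sum>lam\<in>eigenvalues A. lam ^ k * eigenproj A lam $ u $ u)"
  using arg_cong[OF mat_pow_mult_eq_sum_eigenproj[OF assms, of k "axis u 1"], of "\<lambda>v. v $ u"]
  by (simp add: sum_component matrix_vector_mult_basis column_def)

lemma mat_pow_of_real:
  "mat_pow (\<chi> a b. complex_of_real (A $ a $ b)) k $ i $ j = complex_of_real (mat_pow A k $ i $ j)"
  by (induction k arbitrary: i j) (simp_all add: mat_def matrix_matrix_mult_def of_real_sum)

lemma transition_diag_eq_sum_exp:
  fixes A :: "real^'n^'n"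
  assumes sym: "transpose A = A"
  shows "transition A t $ u $ u = (\<Sum>lam\<in>eigenvalues A.
           complex_of_real (eigenproj A lam $ u $ u) * exp (\<i> * complex_of_real (t * lam)))"
proof -
  have exp_series: "(\<lambda>k. z ^ k / fact k) sums exp z" for z :: complex
    using exp_converges[of z] by (simp add: scaleR_conv_of_real divide_inverse mult.commute)
  have "(\<lambda>k. \<Sum>lam\<in>eigenvalues A. complex_of_real (eigenproj A lam $ u $ u) *
           ((\<i> * complex_of_real (t * lam)) ^ k / fact k)) sums
        (\<Sum>lam\<in>eigenvalues A. complex_of_real (eigenproj A lam $ u $ u) *
           exp (\<i> * complex_of_real (t * lam)))"
    by (intro sums_sum sums_mult exp_series)
  moreover have "(\<Sum>lam\<in>eigenvalues A. complex_of_real (eigenproj A lam $ u $ u) *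
           ((\<i> * complex_of_real (t * lam)) ^ k / fact k)) =
       (\<i> * complex_of_real t) ^ k / fact k * mat_pow (\<chi> a b. complex_of_real (A $ a $ b)) k $ u $ u"
    for k
    unfolding mat_pow_of_real mat_pow_diag_eq_sum_eigenproj[OF sym] of_real_sum sum_distrib_left
    by (intro sum.cong refl) (simp add: power_mult_distrib)
  ultimately show ?thesis unfolding transition_def by (simp add: sums_iff)
qed

section \<open>Symmetry of the spectrum of a bipartite graph\<close>

definition bipartition :: "real^'n^'n \<Rightarrow> 'n set \<Rightarrow> bool" where
  "bipartition A V \<longleftrightarrow> (\<forall>i j. A $ i $ j \<noteq> 0 \<longrightarrow> (i \<in> V \<longleftrightarrow> j \<notin> V))"

definition sign_flip :: "'n set \<Rightarrow> real^'n \<Rightarrow> real^'n" where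
  "sign_flip V x = (\<chi> i. (if i \<in> V then 1 else -1) * x $ i)"

lemma sign_flip_sign_flip [simp]: "sign_flip V (sign_flip V x) = x"
  by (simp add: sign_flip_def vec_eq_iff)

lemma inner_sign_flip [simp]: "inner (sign_flip V x) (sign_flip V y) = inner x y"
  by (auto simp: sign_flip_def inner_vec_def intro!: sum.cong)

lemma sign_flip_scaleR: "sign_flip V (r *\<^sub>R x) = r *\<^sub>R sign_flip V x"
  by (simp add: sign_flip_def vec_eq_iff algebra_simps)

lemma sign_flip_diff: "sign_flip V (x - y) = sign_flip V x - sign_flip V y"
  by (simp add: sign_flip_def vec_eq_iff algebra_simps)

lemma bipartite_mult_sign_flip:
  fixes A :: "real^'n^'n"
  assumes "bipartition A V"
  shows "A *v sign_flip V x = - sign_flip V (A *v x)"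
proof -
  have "A $ i $ j * ((if j \<in> V then 1 else -1) * x $ j) =
        - ((if i \<in> V then 1 else -1) * (A $ i $ j * x $ j))" for i j
    using assms unfolding bipartition_def by (cases "A $ i $ j = 0") auto
  then show ?thesis
    by (simp add: sign_flip_def vec_eq_iff matrix_vector_mult_def sum_distrib_left sum_negf)
qed

lemma bipartite_sign_flip_eigenvector:
  fixes A :: "real^'n^'n"
  assumes "bipartition A V" "A *v v = lam *\<^sub>R v"
  shows "A *v sign_flip V v = (- lam) *\<^sub>R sign_flip V v"
  using assms by (simp add: bipartite_mult_sign_flip sign_flip_scaleR)

lemma bipartite_is_eigenvalue_uminus:
  fixes A :: "real^'n^'n"
  assumes V: "bipartition A V" and "is_eigenvalue A lam"
  shows "is_eigenvalue A (- lam)"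
proof -
  obtain v where "v \<noteq> 0" "A *v v = lam *\<^sub>R v" using assms(2) is_eigenvalue_def by blast
  then have "sign_flip V v \<noteq> 0" "A *v sign_flip V v = (- lam) *\<^sub>R sign_flip V v"
    using bipartite_sign_flip_eigenvector[OF V] by (metis inner_sign_flip inner_eq_zero_iff)+
  then show ?thesis unfolding is_eigenvalue_def by blast
qed

lemma bipartite_uminus_eigenvalues:
  fixes A :: "real^'n^'n"
  assumes "bipartition A V"
  shows "uminus ` eigenvalues A = eigenvalues A"
  using bipartite_is_eigenvalue_uminus[OF assms] by (auto simp: image_iff) (metis minus_minus)

lemma bipartite_eigenproj_uminus:
  fixes A :: "real^'n^'n"
  assumes V: "bipartition A V"
  shows "eigenproj A (- lam) *v x = sign_flip V (eigenproj A lam *v sign_flip V x)"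
proof (rule eigenproj_eqI)
  show "A *v sign_flip V (eigenproj A lam *v sign_flip V x) =
        (- lam) *\<^sub>R sign_flip V (eigenproj A lam *v sign_flip V x)"
    by (rule bipartite_sign_flip_eigenvector[OF V eigenproj_eigenvector])
  fix w assume "A *v w = (- lam) *\<^sub>R w"
  then have "A *v sign_flip V w = lam *\<^sub>R sign_flip V w"
    using bipartite_sign_flip_eigenvector[OF V] by fastforce
  then have "inner (sign_flip V x - eigenproj A lam *v sign_flip V x) (sign_flip V w) = 0"
    by (rule eigenproj_residual_orthogonal)
  then show "inner (x - sign_flip V (eigenproj A lam *v sign_flip V x)) w = 0"
    by (metis sign_flip_diff sign_flip_sign_flip inner_sign_flip)
qed

lemma bipartite_eigenproj_diag_uminus:
  fixes A :: "real^'n^'n"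
  assumes "bipartition A V"
  shows "eigenproj A (- lam) $ u $ u = eigenproj A lam $ u $ u"
proof -
  have "sign_flip V (axis u 1) = (if u \<in> V then 1 else -1) *\<^sub>R axis u 1"
    by (simp add: sign_flip_def vec_eq_iff axis_def)
  then have "(eigenproj A (- lam) *v axis u 1) $ u = (eigenproj A lam *v axis u 1) $ u"
    unfolding bipartite_eigenproj_uminus[OF assms] by (simp add: sign_flip_def matrix_vector_mult_scaleR)
  then show ?thesis by (simp add: matrix_vector_mult_basis column_def)
qed

section \<open>Small values of the return amplitude\<close>

lemma sum_exp_eq_sum_cos_if_symmetric:
  fixes c :: "real \<Rightarrow> real"
  assumes "uminus ` L = L" "\<And>lam. c (- lam) = c lam"
  shows "(\<Sum>lam\<in>L. complex_of_real (c lam) * exp (\<i> * complex_of_real (t * lam))) =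
         complex_of_real (\<Sum>lam\<in>L. c lam * cos (t * lam))"
proof -
  have "(\<Sum>lam\<in>L. c lam * sin (t * lam)) = (\<Sum>lam\<in>uminus ` L. c lam * sin (t * lam))"
    using assms(1) by simp
  also have "\<dots> = - (\<Sum>lam\<in>L. c lam * sin (t * lam))"
    by (subst sum.reindex) (auto simp: inj_on_def assms(2) sum_negf)
  finally have "(\<Sum>lam\<in>L. c lam * sin (t * lam)) = 0" by simp
  then show ?thesis by (simp add: complex_eq_iff Re_exp Im_exp Re_sum Im_sum)
qed

lemma sum_cos_le_twice_sum_one_plus_cos:
  fixes c :: "real \<Rightarrow> real"
  assumes L: "finite L" "uminus ` L = L" and c: "\<And>lam. c (- lam) = c lam" "\<And>lam. c lam \<ge> 0"
    and "sum c L = 1" and S: "S \<subseteq> L" "S \<subseteq> {0<..}" "sum c S \<ge> 1/4"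
  shows "(\<Sum>lam\<in>L. c lam * cos (t * lam)) \<le> 2 * (\<Sum>lam\<in>S. c lam * (1 + cos (t * lam)))"
proof -
  define F where "F lam = c lam * (1 - cos (t * lam))" for lam
  have "finite S" using L S finite_subset by blast
  have disjoint: "S \<inter> uminus ` S = {}"
    using S(2) by (auto simp: subset_eq) (metis neg_0_less_iff_less not_less_iff_gr_or_eq)
  have "sum F (S \<union> uminus ` S) \<le> sum F L"
    using L S c(2) by (intro sum_mono2) (auto simp: F_def)
  moreover have "sum F (S \<union> uminus ` S) = 2 * sum F S"
    using \<open>finite S\<close> disjoint
    by (simp add: sum.union_disjoint sum.reindex inj_on_def F_def c(1))
  moreover have "(\<Sum>lam\<in>L. c lam * cos (t * lam)) = sum c L - sum F L"
    by (simp add: F_def sum_subtractf[symmetric] algebra_simps)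
  ultimately have "(\<Sum>lam\<in>L. c lam * cos (t * lam)) \<le> 4 * sum c S - 2 * sum F S"
    using assms(5) S(3) by linarith
  also have "\<dots> = (\<Sum>lam\<in>S. 4 * c lam - 2 * F lam)"
    by (simp add: sum_subtractf sum_distrib_left)
  also have "\<dots> = 2 * (\<Sum>lam\<in>S. c lam * (1 + cos (t * lam)))"
    by (simp add: sum_distrib_left F_def algebra_simps)
  finally show ?thesis .
qed

lemma kronecker_near_half_integers:
  fixes S :: "real set"
  assumes "finite S" "lin_indep_over_Q S" "\<delta> > 0"
  shows "\<exists>t. \<forall>lam\<in>S. \<exists>h::int. \<bar>t * lam - of_int h - 1/2\<bar> < \<delta>"
proof -
  have int_module: "module (\<lambda>r. (*) (real_of_int r))"
    by (simp add: Modules.module.intro distrib_left mult.commute)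
  obtain \<theta> where \<theta>: "bij_betw \<theta> {..<card S} S"
    using ex_bij_betw_nat_finite[OF assms(1)] by (auto simp: lessThan_atLeast0)
  have independent: "module.independent (\<lambda>r. (*) (real_of_int r)) (\<theta> ` {..<card S})"
    unfolding bij_betw_imp_surj_on[OF \<theta>] Modules.module.independent_explicit_module[OF int_module]
  proof (intro allI impI)
    fix T k v
    assume T: "finite T" "T \<subseteq> S" "(\<Sum>v\<in>T. real_of_int (k v) * v) = 0" "v \<in> T"
    have "(\<Sum>x\<in>T. of_rat (of_int (k x)) * x) = 0" using T(3) by simp
    then have "(of_int (k v) :: rat) = 0"
      using assms(2)[unfolded lin_indep_over_Q_def, rule_format, of T "\<lambda>x. of_int (k x)" v] T(1,2,4)
      by simp
    then show "k v = 0" by simp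
  qed
  obtain t h where th: "\<And>i. i < card S \<Longrightarrow> \<bar>t * \<theta> i - of_int (h i) - 1/2\<bar> < \<delta>"
    using Kronecker_thm_1[OF independent bij_betw_imp_inj_on[OF \<theta>] assms(3), of "\<lambda>_. 1/2"]
    by blast
  show ?thesis
  proof (rule exI[of _ t], intro ballI)
    fix lam assume "lam \<in> S"
    then obtain i where "i < card S" "lam = \<theta> i"
      using bij_betw_imp_surj_on[OF \<theta>] by auto
    then show "\<exists>h::int. \<bar>t * lam - of_int h - 1/2\<bar> < \<delta>" using th by blast
  qed
qed

lemma one_minus_cos_le_abs: "1 - cos x \<le> \<bar>x::real\<bar>"
proof -
  have "(sin (x / 2))\<^sup>2 \<le> \<bar>sin (x / 2)\<bar>"
    using abs_sin_le_one[of "x / 2"] by (metis abs_ge_zero mult_left_le power2_abs power2_eq_square)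
  moreover have "1 - cos x = 2 * (sin (x / 2))\<^sup>2" using cos_double_sin[of "x / 2"] by simp
  moreover have "2 * \<bar>sin (x / 2)\<bar> \<le> \<bar>x\<bar>" using abs_sin_x_le_abs_x[of "x / 2"] by simp
  ultimately show ?thesis by linarith
qed

lemma lin_indep_sum_one_plus_cos_small:
  fixes S :: "real set" and c :: "real \<Rightarrow> real"
  assumes "finite S" "S \<noteq> {}" "lin_indep_over_Q S" "\<And>lam. c lam \<ge> 0" "\<epsilon> > 0"
  shows "\<exists>t>0. (\<Sum>lam\<in>S. c lam * (1 + cos (t * lam))) < \<epsilon>"
proof -
  define s where "s = sum c S + 1"
  have "0 \<le> sum c S" using assms(4) by (simp add: sum_nonneg)
  then have "s > 0" "sum c S \<le> s" by (simp_all add: s_def)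
  define \<delta> where "\<delta> = min (1/4) (\<epsilon> / (4 * pi * s))"
  have "\<delta> > 0" "\<delta> \<le> 1/4" using \<open>s > 0\<close> assms(5) by (simp_all add: \<delta>_def)
  have "2 * pi * \<delta> * sum c S < \<epsilon>"
  proof -
    have "\<delta> \<le> \<epsilon> / (4 * pi * s)" by (simp add: \<delta>_def)
    then have le: "2 * pi * \<delta> \<le> 2 * pi * (\<epsilon> / (4 * pi * s))" by (rule mult_left_mono) simp
    have nonneg: "0 \<le> 2 * pi * (\<epsilon> / (4 * pi * s))" using \<open>s > 0\<close> assms(5) by simp
    have "2 * pi * \<delta> * sum c S \<le> 2 * pi * (\<epsilon> / (4 * pi * s)) * s"
      by (rule mult_mono[OF le \<open>sum c S \<le> s\<close> nonneg \<open>0 \<le> sum c S\<close>])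
    also have "\<dots> = \<epsilon> / 2" using \<open>s > 0\<close> by simp
    finally show ?thesis using assms(5) by linarith
  qed
  from kronecker_near_half_integers[OF assms(1,3) \<open>\<delta> > 0\<close>]
  obtain t0 where t0: "\<forall>lam\<in>S. \<exists>h::int. \<bar>t0 * lam - of_int h - 1/2\<bar> < \<delta>" ..
  define t where "t = \<bar>2 * pi * t0\<bar>"
  have near_minus_one: "1 + cos (t * lam) \<le> 2 * pi * \<delta>" if "lam \<in> S" for lam
  proof -
    from bspec[OF t0 that] obtain h :: int where h: "\<bar>t0 * lam - of_int h - 1/2\<bar> < \<delta>" ..
    define d where "d = t0 * lam - of_int h - 1/2"
    have "cos (t * lam) = cos (2 * pi * t0 * lam)" by (simp add: t_def abs_if)
    also have "2 * pi * t0 * lam = (pi + 2 * pi * d) + of_int h * (2 * pi)"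
      by (simp add: d_def algebra_simps)
    also have "cos \<dots> = cos (pi + 2 * pi * d)" using cos.plus_of_int[of "pi + 2 * pi * d" h] by simp
    also have "\<dots> = - cos (2 * pi * d)" by simp
    finally have "1 + cos (t * lam) = 1 - cos (2 * pi * d)" by simp
    also have "\<dots> \<le> 2 * pi * \<bar>d\<bar>" using one_minus_cos_le_abs[of "2 * pi * d"] by (simp add: abs_mult)
    also have "\<dots> \<le> 2 * pi * \<delta>" using h unfolding d_def by simp
    finally show ?thesis .
  qed
  have "t \<noteq> 0"
  proof
    assume "t = 0"
    then have "t0 = 0" by (simp add: t_def)
    obtain lam where "lam \<in> S" using assms(2) by blast
    from bspec[OF t0 this] obtain h :: int where "\<bar>t0 * lam - of_int h - 1/2\<bar> < \<delta>" ..
    then have "\<bar>of_int h + 1/2\<bar> < (1/4::real)"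
      using \<open>t0 = 0\<close> \<open>\<delta> \<le> 1/4\<close> by (simp add: abs_minus_commute add.commute)
    then show False by (cases "h \<ge> 0") linarith+
  qed
  have "(\<Sum>lam\<in>S. c lam * (1 + cos (t * lam))) \<le> (\<Sum>lam\<in>S. c lam * (2 * pi * \<delta>))"
    by (intro sum_mono mult_left_mono near_minus_one assms(4))
  also have "\<dots> = 2 * pi * \<delta> * sum c S" by (simp add: sum_distrib_right mult.commute)
  also have "\<dots> < \<epsilon>" by fact
  finally show ?thesis using \<open>t \<noteq> 0\<close> t_def by (intro exI[of _ t]) auto
qed

lemma cos_pi_div_two_power_multiplicity:
  fixes m :: int
  assumes "m \<noteq> 0"
  shows "cos (pi / 2 ^ multiplicity 2 m * of_int m) = -1"
proof -
  obtain y where y: "m = 2 ^ multiplicity 2 m * y" "odd y"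
    using multiplicity_decompose'[of m 2] assms by auto
  then obtain k where "y = 2 * k + 1" using oddE by blast
  have "pi / 2 ^ multiplicity 2 m * of_int m = pi * of_int y"
    by (subst y(1)) simp
  also have "\<dots> = (2 * of_int k + 1) * pi" using \<open>y = 2 * k + 1\<close> by (simp add: algebra_simps)
  finally show ?thesis using cos_eq_minus1 by blast
qed

lemma sum_one_plus_cos_small:
  fixes S :: "real set" and c :: "real \<Rightarrow> real"
  assumes "finite S" "S \<noteq> {}" "S \<subseteq> {0<..}" "\<And>lam. c lam \<ge> 0" "\<epsilon> > 0"
    and "lin_indep_over_Q S \<or>
         (\<exists>e. \<forall>lam\<in>S. \<exists>m::int. lam = of_int m \<and> multiplicity (2::int) m = e)"
  shows "\<exists>t>0. (\<Sum>lam\<in>S. c lam * (1 + cos (t * lam))) < \<epsilon>"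
  using assms(6)
proof
  assume "lin_indep_over_Q S"
  then show ?thesis by (rule lin_indep_sum_one_plus_cos_small[OF assms(1,2) _ assms(4,5)])
next
  assume "\<exists>e. \<forall>lam\<in>S. \<exists>m::int. lam = of_int m \<and> multiplicity (2::int) m = e"
  then obtain e where e: "\<forall>lam\<in>S. \<exists>m::int. lam = of_int m \<and> multiplicity (2::int) m = e" ..
  have "cos (pi / 2 ^ e * lam) = -1" if "lam \<in> S" for lam
  proof -
    from bspec[OF e that] obtain m :: int where m: "lam = of_int m \<and> multiplicity 2 m = e" ..
    then have "m \<noteq> 0" using assms(3) that by auto
    then show ?thesis using cos_pi_div_two_power_multiplicity[of m] m by simp
  qed
  then have "(\<Sum>lam\<in>S. c lam * (1 + cos (pi / 2 ^ e * lam))) = 0" by simp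
  then show ?thesis using assms(5) by (intro exI[of _ "pi / 2 ^ e"]) simp
qed

lemma not_INF_abs_pos_if_small_values:
  fixes g :: "real \<Rightarrow> real"
  assumes "continuous_on UNIV g" "g 0 > 0" "\<And>\<epsilon>. \<epsilon> > 0 \<Longrightarrow> \<exists>t>0. g t < \<epsilon>"
  shows "\<not> (INF t\<in>{0<..}. \<bar>g t\<bar>) > 0"
proof
  define m where "m = (INF t\<in>{0<..}. \<bar>g t\<bar>)"
  assume "m > 0"
  have lower: "m \<le> \<bar>g t\<bar>" if "t > 0" for t
    unfolding m_def using that by (intro cINF_lower bdd_belowI[of _ 0]) auto
  obtain t where "t > 0" "g t < m" using assms(3) \<open>m > 0\<close> by blast
  with lower have "g t \<le> 0" by fastforce
  then obtain x where "0 \<le> x" "x \<le> t" "g x = 0"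
    using IVT2'[of g t 0 0] assms(1,2) \<open>t > 0\<close> continuous_on_subset by fastforce
  then show False using lower[of x] assms(2) \<open>m > 0\<close> by (cases "x = 0") auto
qed

lemma bipartite_transition_diag_eq_sum_cos:
  fixes A :: "real^'n^'n"
  assumes "transpose A = A" "bipartition A V"
  shows "transition A t $ u $ u =
         complex_of_real (\<Sum>lam\<in>eigenvalues A. eigenproj A lam $ u $ u * cos (t * lam))"
  unfolding transition_diag_eq_sum_exp[OF assms(1)]
  by (intro sum_exp_eq_sum_cos_if_symmetric
      bipartite_uminus_eigenvalues[OF assms(2)] bipartite_eigenproj_diag_uminus[OF assms(2)])

lemma bipartite_sum_cos_le_twice_sum_one_plus_cos:
  fixes A :: "real^'n^'n"
  assumes "transpose A = A" "bipartition A V" "S \<subseteq> eigenvalues A" "S \<subseteq> {0<..}"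
    and "(\<Sum>lam\<in>S. eigenproj A lam $ u $ u) \<ge> 1/4"
  shows "(\<Sum>lam\<in>eigenvalues A. eigenproj A lam $ u $ u * cos (t * lam))
         \<le> 2 * (\<Sum>lam\<in>S. eigenproj A lam $ u $ u * (1 + cos (t * lam)))"
  by (rule sum_cos_le_twice_sum_one_plus_cos[OF finite_eigenvalues[OF assms(1)]
        bipartite_uminus_eigenvalues[OF assms(2)] bipartite_eigenproj_diag_uminus[OF assms(2)]
        eigenproj_diag_nonneg sum_eigenproj_diag[OF assms(1)] assms(3-5)])

theorem corollary17:
  fixes A :: "real^'n^'n" and u :: 'n and S :: "real set"
  assumes "simple_weighted_graph A"
    and "graph_connected A"
    and "graph_bipartite A"
    and "0 \<in> eig_support A u"
    and "S \<noteq> {}"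
    and "S \<subseteq> eig_support A u \<inter> {0<..}"
    and "(\<Sum>lam\<in>S. eigenproj A lam $ u $ u) \<ge> 1/4"
    and "lin_indep_over_Q S \<or>
         (\<exists>e. \<forall>lam\<in>S. \<exists>m::int. lam = of_int m \<and> multiplicity (2::int) m = e)"
  shows "\<not> sedentary A u"
proof -
  have sym: "transpose A = A" using assms(1) by (simp add: simple_weighted_graph_def)
  obtain V where V: "bipartition A V"
    using assms(3) unfolding graph_bipartite_def bipartition_def by blast
  define g where "g t = (\<Sum>lam\<in>eigenvalues A. eigenproj A lam $ u $ u * cos (t * lam))" for t
  have S: "S \<subseteq> eigenvalues A" "S \<subseteq> {0<..}" "finite S"
    using assms(6) finite_subset[OF _ finite_eigenvalues[OF sym]] by (auto simp: eig_support_def)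
  have "\<exists>t>0. g t < \<epsilon>" if "\<epsilon> > 0" for \<epsilon>
  proof -
    from sum_one_plus_cos_small[where c = "\<lambda>lam. eigenproj A lam $ u $ u",
        OF S(3) assms(5) S(2) eigenproj_diag_nonneg half_gt_zero[OF that] assms(8)]
    obtain t where "t > 0 \<and> (\<Sum>lam\<in>S. eigenproj A lam $ u $ u * (1 + cos (t * lam))) < \<epsilon> / 2" ..
    then show ?thesis
      using bipartite_sum_cos_le_twice_sum_one_plus_cos[OF sym V S(1,2) assms(7), of t]
      unfolding g_def by (intro exI[of _ t]) linarith
  qed
  moreover have "g 0 = 1" unfolding g_def using sum_eigenproj_diag[OF sym] by simp
  moreover have "continuous_on UNIV g" unfolding g_def by (intro continuous_intros)
  ultimately have "\<not> (INF t\<in>{0<..}. \<bar>g t\<bar>) > 0"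
    using not_INF_abs_pos_if_small_values by simp
  moreover have "norm (transition A t $ u $ u) = \<bar>g t\<bar>" for t
    unfolding bipartite_transition_diag_eq_sum_cos[OF sym V] norm_of_real g_def ..
  ultimately show ?thesis unfolding sedentary_def by simp
qed

end
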